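(* Let $M=(I,O,T,t_0,\tau,\mathit{out})$ be a Moore system and let $A=(2^{I\cup O},Q,q_0,\delta,\mathit{acc})$ be a nondeterministic word automaton with transition relation $\delta\subseteq Q\times 2^{I\cup O}\times Q$. Let $D$ be a totally ordered set, let $\triangleright\subseteq Q\times D\times D$ be a rank comparison relation (write $d\triangleright_q d'$ for $(q,d,d')\in\triangleright$), and let $\rho:Q\times T\to D$ be a ranking function. Define the formula, with a free function symbol $\mathit{rch}:Q\times T\to\{\mathit{true},\mathit{false}\}$, $$\Phi^{GR}_{\mathsf E}(M,A)=\mathit{rch}(q_0,t_0)\wedge\bigwedge_{(q,t)\in Q\times T}\Big[\mathit{rch}(q,t)\rightarrow\bigvee_{(q,\,i\cup o,\,q')\in\delta}\big(\mathit{out}(t)=o\wedge \mathit{rch}(q',\tau(t,i))\wedge \rho(q,t)\triangleright_q\rho(q',\tau(t,i))\big)\Big],$$ where $i\in 2^I$, $o\in 2^O$. Then $\Phi^{GR}_{\mathsf E}(M,A)$ is satisfiable using $\rho$ and $D$ (i.e., there is an interpretation of $\mathit{rch}$ making it true for the given $\rho$) if and only if the product $M\otimes A_{\mathsf E}$ has an infinite path $(q_1,t_1)(q_2,t_2)\dots$ that satisfies $\triangleright$ using $\rho$ and $D$, i.e., $\rho(q_j,t_j)\triangleright_{q_j}\rho(q_{j+1},t_{j+1})$ for every $j\ge 1$.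
   Context: A Moore system $M=(I,O,T,t_0,\tau,\mathit{out})$ has disjoint finite sets of inputs $I$ and outputs $O$, finite state set $T$, initial state $t_0$, total transition function $\tau:T\times 2^I\to T$ and output labelling $\mathit{out}:T\to 2^O$. The product $M\otimes A_{\mathsf E}$ is the graph with vertices $Q\times T$, initial vertex $(q_0,t_0)$, and an edge from $(q,t)$ to $(q',\tau(t,i))$ whenever $(q,i\cup o,q')\in\delta$ with $o=\mathit{out}(t)$ and $i\in 2^I$; paths of the product start at the initial vertex $(q_0,t_0)$. *)

theory Defs
  imports Main
begin

record ('ap, 's) moore =
  m_inp :: "'ap set"
  m_outp :: "'ap set"
  m_states :: "'s set"
  m_init :: 's
  m_trans :: "'s \<Rightarrow> 'ap set \<Rightarrow> 's"
  m_out :: "'s \<Rightarrow> 'ap set"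

definition moore_system :: "('ap, 's) moore \<Rightarrow> bool" where
  "moore_system M \<longleftrightarrow>
     finite (m_inp M) \<and> finite (m_outp M) \<and> m_inp M \<inter> m_outp M = {} \<and>
     finite (m_states M) \<and> m_init M \<in> m_states M \<and>
     (\<forall>t\<in>m_states M. \<forall>i. i \<subseteq> m_inp M \<longrightarrow> m_trans M t i \<in> m_states M) \<and>
     (\<forall>t\<in>m_states M. m_out M t \<subseteq> m_outp M)"

text \<open>Nondeterministic word automaton A = (2^(I \<union> O), Q, q0, delta, acc).
  The acceptance condition is carried along but plays no role in the statement.\<close>
record ('ap, 'q, 'acc) nwa =
  a_states :: "'q set"
  a_init :: 'q
  a_delta :: "('q \<times> 'ap set \<times> 'q) set"
  a_acc :: 'acc

definition nwa_over :: "'ap set \<Rightarrow> ('ap, 'q, 'acc) nwa \<Rightarrow> bool" where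
  "nwa_over \<Sigma> A \<longleftrightarrow> finite (a_states A) \<and> a_init A \<in> a_states A \<and>
     a_delta A \<subseteq> a_states A \<times> Pow \<Sigma> \<times> a_states A"

definition prod_edge :: "('ap, 's) moore \<Rightarrow> ('ap, 'q, 'acc) nwa \<Rightarrow> 'q \<times> 's \<Rightarrow> 'q \<times> 's \<Rightarrow> bool" where
  "prod_edge M A v w \<longleftrightarrow>
     fst v \<in> a_states A \<and> snd v \<in> m_states M \<and>
     (\<exists>i q'. i \<subseteq> m_inp M \<and> (fst v, i \<union> m_out M (snd v), q') \<in> a_delta A \<and>
             w = (q', m_trans M (snd v) i))"

definition prod_inf_path :: "('ap, 's) moore \<Rightarrow> ('ap, 'q, 'acc) nwa \<Rightarrow> (nat \<Rightarrow> 'q \<times> 's) \<Rightarrow> bool" where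
  "prod_inf_path M A p \<longleftrightarrow> p 0 = (a_init A, m_init M) \<and> (\<forall>j. prod_edge M A (p j) (p (Suc j)))"

definition path_sat_rc :: "('q \<times> 'd \<times> 'd) set \<Rightarrow> ('q \<times> 's \<Rightarrow> 'd) \<Rightarrow> (nat \<Rightarrow> 'q \<times> 's) \<Rightarrow> bool" where
  "path_sat_rc rc \<rho> p \<longleftrightarrow> (\<forall>j. (fst (p j), \<rho> (p j), \<rho> (p (Suc j))) \<in> rc)"

definition Phi_GR_E :: "('ap, 's) moore \<Rightarrow> ('ap, 'q, 'acc) nwa \<Rightarrow> ('q \<times> 'd \<times> 'd) set \<Rightarrow>
    ('q \<times> 's \<Rightarrow> 'd) \<Rightarrow> ('q \<Rightarrow> 's \<Rightarrow> bool) \<Rightarrow> bool" where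
  "Phi_GR_E M A rc \<rho> rch \<longleftrightarrow>
     rch (a_init A) (m_init M) \<and>
     (\<forall>q\<in>a_states A. \<forall>t\<in>m_states M. rch q t \<longrightarrow>
        (\<exists>q' i ob. (q, i \<union> ob, q') \<in> a_delta A \<and> i \<subseteq> m_inp M \<and> ob \<subseteq> m_outp M \<and>
           m_out M t = ob \<and> rch q' (m_trans M t i) \<and>
           (q, \<rho> (q, t), \<rho> (q', m_trans M t i)) \<in> rc))"

end

theory Submission
  imports Defs
begin

text \<open>Read over the product graph, the formula says that the set of vertices where \<open>rch\<close>
  holds contains the initial vertex and that each of its vertices \<open>v\<close> has a product successor
  \<open>w\<close> in the set with \<open>\<rho> v \<triangleright> \<rho> w\<close>. Dependent choice turns such a set
  into an infinite rank-respecting path; conversely, the vertex set of such a path is such a set.\<close>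

lemma infinite_path_from_invariant:
  assumes "S v\<^sub>0"
    and "\<And>v. S v \<Longrightarrow> \<exists>w. S w \<and> E v w"
  shows "\<exists>p. p 0 = v\<^sub>0 \<and> (\<forall>j. E (p j) (p (Suc j)))"
proof -
  have "\<exists>p. \<forall>j. (S (p j) \<and> (j = 0 \<longrightarrow> p j = v\<^sub>0)) \<and> E (p j) (p (Suc j))"
    by (rule dependent_nat_choice) (use assms in auto)
  then show ?thesis by blast
qed

lemma prod_edge_target_states:
  assumes "moore_system M" and "nwa_over \<Sigma> A" and "prod_edge M A v w"
  shows "w \<in> a_states A \<times> m_states M"
  using assms unfolding moore_system_def nwa_over_def prod_edge_def by auto

lemma Phi_GR_E_iff_prod_edge:
  assumes "moore_system M"
  shows "Phi_GR_E M A rc \<rho> rch \<longleftrightarrow>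
    rch (a_init A) (m_init M) \<and>
    (\<forall>v \<in> a_states A \<times> m_states M. case_prod rch v \<longrightarrow>
       (\<exists>w. prod_edge M A v w \<and> case_prod rch w \<and> (fst v, \<rho> v, \<rho> w) \<in> rc))"
proof -
  have "(\<exists>q' i ob. (q, i \<union> ob, q') \<in> a_delta A \<and> i \<subseteq> m_inp M \<and> ob \<subseteq> m_outp M \<and>
           m_out M t = ob \<and> rch q' (m_trans M t i) \<and> (q, \<rho> (q, t), \<rho> (q', m_trans M t i)) \<in> rc)
        \<longleftrightarrow> (\<exists>w. prod_edge M A (q, t) w \<and> case_prod rch w \<and> (q, \<rho> (q, t), \<rho> w) \<in> rc)"
    if "q \<in> a_states A" and "t \<in> m_states M" for q t
  proof -
    have "m_out M t \<subseteq> m_outp M"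
      using assms \<open>t \<in> m_states M\<close> unfolding moore_system_def by blast
    then show ?thesis
      using that unfolding prod_edge_def by auto
  qed
  then show ?thesis
    unfolding Phi_GR_E_def by auto
qed

lemma rc_path_if_Phi_GR_E:
  assumes "moore_system M" and "nwa_over \<Sigma> A" and "Phi_GR_E M A rc \<rho> rch"
  shows "\<exists>p. prod_inf_path M A p \<and> path_sat_rc rc \<rho> p"
proof -
  define S where "S v \<longleftrightarrow> v \<in> a_states A \<times> m_states M \<and> case_prod rch v" for v
  have "S (a_init A, m_init M)"
    using assms unfolding S_def Phi_GR_E_def moore_system_def nwa_over_def by auto
  moreover have "\<exists>w. S w \<and> prod_edge M A v w \<and> (fst v, \<rho> v, \<rho> w) \<in> rc" if "S v" for v
    using that assms prod_edge_target_states[OF assms(1,2)]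
    unfolding S_def Phi_GR_E_iff_prod_edge[OF assms(1)] by blast
  ultimately have "\<exists>p. p 0 = (a_init A, m_init M) \<and>
      (\<forall>j. prod_edge M A (p j) (p (Suc j)) \<and> (fst (p j), \<rho> (p j), \<rho> (p (Suc j))) \<in> rc)"
    by (rule infinite_path_from_invariant)
  then show ?thesis
    unfolding prod_inf_path_def path_sat_rc_def by blast
qed

lemma Phi_GR_E_path_vertices:
  assumes "moore_system M" and "prod_inf_path M A p" and "path_sat_rc rc \<rho> p"
  shows "Phi_GR_E M A rc \<rho> (\<lambda>q t. (q, t) \<in> range p)"
  unfolding Phi_GR_E_iff_prod_edge[OF assms(1)]
proof (intro conjI ballI impI)
  show "(a_init A, m_init M) \<in> range p"
    using assms(2) unfolding prod_inf_path_def by (metis rangeI)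
next
  fix v assume "case_prod (\<lambda>q t. (q, t) \<in> range p) v"
  then obtain j where "v = p j" by auto
  then have "prod_edge M A v (p (Suc j)) \<and> case_prod (\<lambda>q t. (q, t) \<in> range p) (p (Suc j)) \<and>
      (fst v, \<rho> v, \<rho> (p (Suc j))) \<in> rc"
    using assms(2,3) unfolding prod_inf_path_def path_sat_rc_def by (simp add: case_prod_beta)
  then show "\<exists>w. prod_edge M A v w \<and> case_prod (\<lambda>q t. (q, t) \<in> range p) w \<and> (fst v, \<rho> v, \<rho> w) \<in> rc"
    by (rule exI)
qed

theorem mainTheorem1:
  fixes M :: "('ap, 's) moore"
    and A :: "('ap, 'q, 'acc) nwa"
    and rc :: "('q \<times> 'd::linorder \<times> 'd) set"
    and \<rho> :: "'q \<times> 's \<Rightarrow> 'd"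
  assumes "moore_system M"
    and "nwa_over (m_inp M \<union> m_outp M) A"
  shows "(\<exists>rch. Phi_GR_E M A rc \<rho> rch) \<longleftrightarrow> (\<exists>p. prod_inf_path M A p \<and> path_sat_rc rc \<rho> p)"
  using rc_path_if_Phi_GR_E[OF assms] Phi_GR_E_path_vertices[OF assms(1)] by blast

end
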